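(* Let $G=(V,\Sigma,R,S)$ be a context-free grammar in Greibach Normal Form. For all $t,u\in\Sigma^*$: if $D_G(t)=D_G(u)$, then $t\equiv_{L(G)}u$.
   Context: A context-free grammar $G=(V,\Sigma,R,S)$ in Greibach Normal Form has every production of the form $S\to\epsilon$ or $A\to a\,\beta$ with $a\in\Sigma$, $\beta\in(V\setminus\{S\})^*$; $L(G)$ is its language. Let $\delta_G(a,A)=\{\beta\in V^*:(A\to a\,\beta)\in R\}$. Define $\pi:\Sigma^*\times V^*\to\mathcal{P}(V^* )$ recursively by $\pi(t,\alpha)=\{\alpha\}$ if $t=\epsilon$; $\pi(t,\alpha)=\emptyset$ if $t\neq\epsilon$ and $\alpha=\epsilon$; and otherwise $\pi(t,\alpha)=\bigcup_{\beta\in\delta_G(t_0,\alpha_0)}\pi(t_{1:},\beta\alpha_{1:})$, where $t_0$ is the first character of $t$, $t_{1:}$ the rest of $t$, $\alpha_0$ the first symbol of $\alpha$ and $\alpha_{1:}$ the rest of $\alpha$. The pre-displacement of $t\in\Sigma^*$ is $D_G(t)=\{(\alpha,\beta):\alpha\in V^*,\ \beta\in\pi(t,\alpha)\}$. Syntactic congruence: $t\equiv_{L(G)}u$ iff for all $w,z\in\Sigma^*$, $wtz\in L(G)\leftrightarrow wuz\in L(G)$. *)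

theory Defs
  imports Main
begin

text \<open>Symbols of a context-free grammar: nonterminals of type 'n (the set V = UNIV),
terminals of type 't (the alphabet Sigma = UNIV).\<close>
datatype ('n, 't) sym = Nt 'n | Tm 't

type_synonym ('n, 't) prods = "('n \<times> ('n, 't) sym list) set"

definition derive1 :: "('n, 't) prods \<Rightarrow> ('n, 't) sym list \<Rightarrow> ('n, 't) sym list \<Rightarrow> bool" where
  "derive1 R u v \<longleftrightarrow> (\<exists>l A r rhs. (A, rhs) \<in> R \<and> u = l @ Nt A # r \<and> v = l @ rhs @ r)"

definition Lang :: "('n, 't) prods \<Rightarrow> 'n \<Rightarrow> 't list set" where
  "Lang R S = {w. (derive1 R)\<^sup>*\<^sup>* [Nt S] (map Tm w)}"

definition GNF :: "('n, 't) prods \<Rightarrow> 'n \<Rightarrow> bool" where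
  "GNF R S \<longleftrightarrow> (\<forall>(A, rhs) \<in> R. (A = S \<and> rhs = []) \<or>
      (\<exists>a \<beta>. rhs = Tm a # map Nt \<beta> \<and> S \<notin> set \<beta>))"

definition delta :: "('n, 't) prods \<Rightarrow> 't \<Rightarrow> 'n \<Rightarrow> 'n list set" where
  "delta R a A = {\<beta>. (A, Tm a # map Nt \<beta>) \<in> R}"

fun pi :: "('n, 't) prods \<Rightarrow> 't list \<Rightarrow> 'n list \<Rightarrow> 'n list set" where
  "pi R [] \<alpha> = {\<alpha>}"
| "pi R (a # t) [] = {}"
| "pi R (a # t) (A # \<alpha>) = (\<Union>\<beta> \<in> delta R a A. pi R t (\<beta> @ \<alpha>))"

definition predisp :: "('n, 't) prods \<Rightarrow> 't list \<Rightarrow> ('n list \<times> 'n list) set" where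
  "predisp R t = {(\<alpha>, \<beta>). \<beta> \<in> pi R t \<alpha>}"

definition syn_cong :: "'t list set \<Rightarrow> 't list \<Rightarrow> 't list \<Rightarrow> bool" where
  "syn_cong L t u \<longleftrightarrow> (\<forall>w z. w @ t @ z \<in> L \<longleftrightarrow> w @ u @ z \<in> L)"

end

theory Submission
  imports Defs
begin

text \<open>A grammar in Greibach normal form is recognised by the one-state pushdown automaton whose
stack is a sentential form: a nonterminal \<open>A\<close> on top is replaced by \<open>\<beta>\<close> while reading \<open>a\<close>
whenever \<open>A \<rightarrow> a \<beta>\<close> is a production. Hence a nonempty word \<open>w\<close> lies in \<open>L(G)\<close> iff the stack
\<open>[S]\<close> can be emptied by reading \<open>w\<close>, i.e. iff \<open>\<epsilon> \<in> \<pi>(w, S)\<close>. Since \<open>\<pi>\<close> composes along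
concatenation, \<open>\<pi>(w t z, S)\<close> depends on \<open>t\<close> only through the relation \<open>D(t)\<close>. The empty word
is harmless: \<open>\<pi>(t, \<epsilon>)\<close> is empty for nonempty \<open>t\<close>, so \<open>D(t) = D(\<epsilon>)\<close> forces \<open>t = \<epsilon>\<close>.\<close>

fun stack_accepts :: "('n, 't) prods \<Rightarrow> 't list \<Rightarrow> ('n, 't) sym list \<Rightarrow> bool" where
  "stack_accepts R [] x \<longleftrightarrow> x = []"
| "stack_accepts R (a # w) [] \<longleftrightarrow> False"
| "stack_accepts R (a # w) (Tm b # x) \<longleftrightarrow> a = b \<and> stack_accepts R w x"
| "stack_accepts R (a # w) (Nt A # x) \<longleftrightarrow> (\<exists>\<beta> \<in> delta R a A. stack_accepts R w (map Nt \<beta> @ x))"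

lemma stack_accepts_map_Tm: "stack_accepts R w (map Tm w)"
  by (induction w) auto

lemma stack_accepts_map_Nt_iff: "stack_accepts R w (map Nt \<alpha>) \<longleftrightarrow> [] \<in> pi R w \<alpha>"
proof (induction w arbitrary: \<alpha>)
  case Nil
  then show ?case by auto
next
  case (Cons a w)
  then show ?case by (cases \<alpha>) (auto simp flip: map_append)
qed

text \<open>Backward closure under a production step applied anywhere in the stack, not only on top:
this is what lets arbitrary (not necessarily leftmost) derivations be simulated.\<close>

lemma stack_accepts_expand:
  assumes "(A, Tm a # map Nt \<beta>) \<in> R"
    and "stack_accepts R w (l @ Tm a # map Nt \<beta> @ r)"
  shows "stack_accepts R w (l @ Nt A # r)"
  using assms(2)
proof (induction w arbitrary: l)
  case Nil
  then show ?case by simp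
next
  case (Cons c w)
  show ?case
  proof (cases l)
    case Nil
    then show ?thesis using Cons.prems assms(1) by (auto simp: delta_def)
  next
    case (Cons s l')
    show ?thesis
    proof (cases s)
      case (Nt B)
      then obtain \<beta>' where "\<beta>' \<in> delta R c B"
        and "stack_accepts R w ((map Nt \<beta>' @ l') @ Tm a # map Nt \<beta> @ r)"
        using Cons.prems \<open>l = s # l'\<close> by auto
      moreover from this(2) have "stack_accepts R w ((map Nt \<beta>' @ l') @ Nt A # r)"
        by (rule Cons.IH)
      ultimately show ?thesis using Nt \<open>l = s # l'\<close> by auto
    next
      case (Tm b)
      then show ?thesis using Cons.prems Cons.IH[of l'] \<open>l = s # l'\<close> by auto
    qed
  qed
qed

lemma derive1_append_left: "derive1 R x y \<Longrightarrow> derive1 R (p @ x) (p @ y)"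
  unfolding derive1_def by (metis append.assoc)

lemma derives_append_left: "(derive1 R)\<^sup>*\<^sup>* x y \<Longrightarrow> (derive1 R)\<^sup>*\<^sup>* (p @ x) (p @ y)"
  by (induction rule: rtranclp_induct) (auto intro: rtranclp.rtrancl_into_rtrancl derive1_append_left)

lemma derives_Nil: "(derive1 R)\<^sup>*\<^sup>* [] v \<Longrightarrow> v = []"
  by (induction rule: rtranclp_induct) (auto simp: derive1_def)

lemma derive1_Nt_singleton: "derive1 R [Nt A] y \<longleftrightarrow> (A, y) \<in> R"
  unfolding derive1_def by (auto simp: Cons_eq_append_conv)

lemma stack_accepts_derives: "stack_accepts R w x \<Longrightarrow> (derive1 R)\<^sup>*\<^sup>* x (map Tm w)"
proof (induction w arbitrary: x)
  case Nil
  then show ?case by simp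
next
  case (Cons a w)
  then obtain s x' where x: "x = s # x'" by (cases x) auto
  show ?case
  proof (cases s)
    case (Nt A)
    then obtain \<beta> where "(A, Tm a # map Nt \<beta>) \<in> R" and acc: "stack_accepts R w (map Nt \<beta> @ x')"
      using Cons.prems x by (auto simp: delta_def)
    then have "derive1 R ([] @ Nt A # x') ([] @ (Tm a # map Nt \<beta>) @ x')"
      unfolding derive1_def by blast
    moreover have "(derive1 R)\<^sup>*\<^sup>* ([Tm a] @ map Nt \<beta> @ x') ([Tm a] @ map Tm w)"
      using derives_append_left Cons.IH acc by blast
    ultimately show ?thesis using Nt x by (auto intro: converse_rtranclp_into_rtranclp)
  next
    case (Tm b)
    then have "stack_accepts R w x'" and "a = b" using Cons.prems x by auto
    then have "(derive1 R)\<^sup>*\<^sup>* ([Tm a] @ x') ([Tm a] @ map Tm w)"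
      using derives_append_left Cons.IH by blast
    then show ?thesis using Tm x \<open>a = b\<close> by simp
  qed
qed

lemma GNF_D:
  "GNF R S \<Longrightarrow> (A, rhs) \<in> R \<Longrightarrow> (A = S \<and> rhs = []) \<or> (\<exists>a \<beta>. rhs = Tm a # map Nt \<beta> \<and> S \<notin> set \<beta>)"
  unfolding GNF_def by (drule (1) bspec) simp

text \<open>Excluding the start symbol rules out its \<open>\<epsilon>\<close>-production, which the automaton cannot simulate.\<close>

lemma derives_stack_accepts:
  assumes "GNF R S" and "(derive1 R)\<^sup>*\<^sup>* x (map Tm w)" and "Nt S \<notin> set x"
  shows "stack_accepts R w x"
  using assms(2,3)
proof (induction rule: converse_rtranclp_induct)
  case base
  then show ?case by (simp add: stack_accepts_map_Tm)
next
  case (step x y)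
  then obtain l A r rhs where p: "(A, rhs) \<in> R" "x = l @ Nt A # r" "y = l @ rhs @ r"
    unfolding derive1_def by blast
  with step.prems obtain a \<beta> where rhs: "rhs = Tm a # map Nt \<beta>" "S \<notin> set \<beta>"
    using GNF_D[OF assms(1) p(1)] by auto
  with p step.prems have "Nt S \<notin> set y" by auto
  with step.IH have "stack_accepts R w y" by simp
  then show ?case using stack_accepts_expand p rhs by simp
qed

lemma Lang_iff_pi:
  assumes "GNF R S" and "w \<noteq> []"
  shows "w \<in> Lang R S \<longleftrightarrow> [] \<in> pi R w [S]"
proof
  assume "w \<in> Lang R S"
  then have "(derive1 R)\<^sup>*\<^sup>* [Nt S] (map Tm w)" unfolding Lang_def by simp
  with assms(2) obtain y where "(S, y) \<in> R" and y: "(derive1 R)\<^sup>*\<^sup>* y (map Tm w)"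
    by (auto elim: converse_rtranclpE simp: derive1_Nt_singleton)
  moreover have "y \<noteq> []"
    using y derives_Nil assms(2) by fastforce
  ultimately obtain a \<beta> where SR: "(S, Tm a # map Nt \<beta>) \<in> R" and "S \<notin> set \<beta>"
    and "y = Tm a # map Nt \<beta>"
    using GNF_D[OF assms(1)] by blast
  then have "stack_accepts R w ([] @ Tm a # map Nt \<beta> @ [])"
    using derives_stack_accepts[OF assms(1) y] by auto
  then have "stack_accepts R w ([] @ Nt S # [])"
    by (rule stack_accepts_expand[OF SR])
  then have "stack_accepts R w (map Nt [S])" by simp
  then show "[] \<in> pi R w [S]" by (simp only: stack_accepts_map_Nt_iff)
next
  assume "[] \<in> pi R w [S]"
  then have "stack_accepts R w (map Nt [S])" by (simp only: stack_accepts_map_Nt_iff)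
  then show "w \<in> Lang R S" unfolding Lang_def by (simp add: stack_accepts_derives)
qed

lemma pi_append: "pi R (w @ t) \<alpha> = (\<Union>\<gamma> \<in> pi R w \<alpha>. pi R t \<gamma>)"
proof (induction w arbitrary: \<alpha>)
  case Nil
  then show ?case by simp
next
  case (Cons a w)
  then show ?case by (cases \<alpha>) auto
qed

lemma pi_Nil_stack: "pi R t [] = (if t = [] then {[]} else {})"
  by (cases t) auto

lemma predisp_eq_iff: "predisp R t = predisp R u \<longleftrightarrow> (\<forall>\<alpha>. pi R t \<alpha> = pi R u \<alpha>)"
  unfolding predisp_def by blast

lemma syn_cong_if_pi_eq:
  assumes "GNF R S" and pi_eq: "\<And>\<alpha>. pi R t \<alpha> = pi R u \<alpha>"
  shows "syn_cong (Lang R S) t u"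
proof (cases "t = []")
  case True
  with pi_eq[of "[]"] have "u = []" by (simp add: pi_Nil_stack split: if_splits)
  with True show ?thesis unfolding syn_cong_def by simp
next
  case False
  with pi_eq[of "[]"] have "u \<noteq> []" by (simp add: pi_Nil_stack split: if_splits)
  have "w @ t @ z \<in> Lang R S \<longleftrightarrow> w @ u @ z \<in> Lang R S" for w z
  proof -
    have "w @ t @ z \<in> Lang R S \<longleftrightarrow> [] \<in> pi R (w @ t @ z) [S]"
      using Lang_iff_pi[OF assms(1)] False by simp
    also have "\<dots> \<longleftrightarrow> [] \<in> pi R (w @ u @ z) [S]"
      by (simp only: pi_append pi_eq)
    also have "\<dots> \<longleftrightarrow> w @ u @ z \<in> Lang R S"
      using Lang_iff_pi[OF assms(1)] \<open>u \<noteq> []\<close> by simp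
    finally show ?thesis .
  qed
  then show ?thesis unfolding syn_cong_def by blast
qed

theorem lemma3:
  fixes R :: "('n, 't) prods" and S :: 'n and t u :: "'t list"
  assumes "finite R" and "GNF R S"
    and "predisp R t = predisp R u"
  shows "syn_cong (Lang R S) t u"
  using syn_cong_if_pi_eq[OF assms(2)] assms(3) by (simp add: predisp_eq_iff)

end
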